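(* Let $p$ be an odd prime, $\mathbb{F}$ a field of characteristic $p$, and $a,s$ natural numbers with $a<p$. Then, as $\mathbb{F}C$-modules, $$H^{(a^{sp})}(R_{as})\big\downarrow_C\cong\bigoplus_{\delta}K_\delta,$$ where $\delta$ runs over all set partitions of $\{1,\ldots,as\}$ into $s$ sets of size $a$.
   Context: $H^{(a^{sp})}$ is the $\mathbb{F}S_{asp}$-permutation module with basis the set partitions of $\{1,\ldots,asp\}$ into $sp$ sets of size $a$. For $j\geq1$ let $z_j=(p(j-1)+1,\ldots,pj)$ and $\mathcal{O}_j=\{p(j-1)+1,\ldots,pj\}$; $\sigma=z_1\cdots z_{as}$, $R_{as}=\langle\sigma\rangle$, and $C=\langle z_1\rangle\times\cdots\times\langle z_{as}\rangle\leq N_{S_{asp}}(R_{as})$. The Brauer quotient $H^{(a^{sp})}(R_{as})$ (fixed points of $R_{as}$ modulo relative traces from proper subgroups) is identified with the $\mathbb{F}$-span of the set partitions fixed by $R_{as}$. Given a set partition $\delta=\{\delta_1,\ldots,\delta_s\}$ of $\{1,\ldots,as\}$ into sets of size $a$, a fixed set partition $\omega$ has type $\delta$ if there are sets $A_1,\ldots,A_s$ with $|A_i\cap\mathcal{O}_j|=1$ if $j\in\delta_i$ and $0$ otherwise, such that $\omega=\{A_i\sigma^k: 1\leq i\leq s, 0\leq k\leq p-1\}$; $K_\delta$ is the subspace of $H^{(a^{sp})}(R_{as})$ spanned by the fixed set partitions of type $\delta$. *)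

theory Defs
  imports "HOL-Library.Disjoint_Sets" "HOL-Computational_Algebra.Primes"
begin

(* Permutations of {1..asp} are modelled as functions nat => nat (identity outside). *)

definition orb :: "nat \<Rightarrow> nat \<Rightarrow> nat set" where
  "orb p j = {p*(j-1)+1 .. p*j}"

definition zcyc :: "nat \<Rightarrow> nat \<Rightarrow> nat \<Rightarrow> nat" where
  "zcyc p j x = (if x \<in> orb p j then (if x = p*j then p*(j-1)+1 else Suc x) else x)"

definition sigma :: "nat \<Rightarrow> nat \<Rightarrow> nat \<Rightarrow> nat" where
  "sigma p n = foldr (\<lambda>j f. zcyc p j \<circ> f) [1..<Suc n] id"

definition Rgrp :: "nat \<Rightarrow> nat \<Rightarrow> (nat \<Rightarrow> nat) set" where
  "Rgrp p n = range (\<lambda>k. sigma p n ^^ k)"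

definition Cgrp :: "nat \<Rightarrow> nat \<Rightarrow> (nat \<Rightarrow> nat) set" where
  "Cgrp p n = {g. \<exists>k :: nat \<Rightarrow> nat. g = foldr (\<lambda>j f. (zcyc p j ^^ k j) \<circ> f) [1..<Suc n] id}"

definition setparts :: "nat \<Rightarrow> nat \<Rightarrow> nat \<Rightarrow> nat set set set" where
  "setparts N m a = {P. partition_on {1..N} P \<and> card P = m \<and> (\<forall>B\<in>P. card B = a)}"

definition act_part :: "(nat \<Rightarrow> nat) \<Rightarrow> nat set set \<Rightarrow> nat set set" where
  "act_part g \<omega> = (\<lambda>B. g ` B) ` \<omega>"

(* set partitions of {1..asp} into sp sets of size a fixed by R_{as}:
   the basis of the Brauer quotient H^{(a^{sp})}(R_{as}) *)
definition fixparts :: "nat \<Rightarrow> nat \<Rightarrow> nat \<Rightarrow> nat set set set" where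
  "fixparts p a s = {\<omega> \<in> setparts (a*s*p) (s*p) a. \<forall>g\<in>Rgrp p (a*s). act_part g \<omega> = \<omega>}"

(* omega has type delta (the sets A_i are indexed by the blocks of delta) *)
definition has_type :: "nat \<Rightarrow> nat \<Rightarrow> nat \<Rightarrow> nat set set \<Rightarrow> nat set set \<Rightarrow> bool" where
  "has_type p a s \<delta> \<omega> \<longleftrightarrow>
     (\<exists>A :: nat set \<Rightarrow> nat set.
        (\<forall>D\<in>\<delta>. \<forall>j\<ge>1. card (A D \<inter> orb p j) = (if j \<in> D then 1 else 0)) \<and>
        \<omega> = {(sigma p (a*s) ^^ k) ` (A D) | D k. D \<in> \<delta> \<and> k \<le> p - 1})"

(* The Brauer quotient H^{(a^{sp})}(R_{as}), identified with the F-span of the fixed set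
   partitions: vectors are coefficient functions supported on fixparts. *)
definition Hbr :: "nat \<Rightarrow> nat \<Rightarrow> nat \<Rightarrow> (nat set set \<Rightarrow> 'f::field) set" where
  "Hbr p a s = {v. \<forall>\<omega>. v \<omega> \<noteq> 0 \<longrightarrow> \<omega> \<in> fixparts p a s}"

definition Kdelta :: "nat \<Rightarrow> nat \<Rightarrow> nat \<Rightarrow> nat set set \<Rightarrow> (nat set set \<Rightarrow> 'f::field) set" where
  "Kdelta p a s \<delta> = {v. \<forall>\<omega>. v \<omega> \<noteq> 0 \<longrightarrow> \<omega> \<in> fixparts p a s \<and> has_type p a s \<delta> \<omega>}"

(* linear action of g in C on H(R): permutation of the basis, g . omega = act_part g omega *)
definition act_vec :: "nat \<Rightarrow> nat \<Rightarrow> nat \<Rightarrow> (nat \<Rightarrow> nat) \<Rightarrow> (nat set set \<Rightarrow> 'f::field) \<Rightarrow> (nat set set \<Rightarrow> 'f)" where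
  "act_vec p a s g v = (\<lambda>\<omega>'. \<Sum>\<omega>\<in>{\<omega> \<in> fixparts p a s. act_part g \<omega> = \<omega>'}. v \<omega>)"

end

theory Submission
  imports Defs "HOL-Number_Theory.Cong"
begin

(*
  Every power of \<sigma> and every element of C rotates each orbit O_j inside itself (a block
  rotation), so C commutes with R_{as}. Hence C permutes the R_{as}-fixed set partitions and
  preserves their types, and the decomposition amounts to every fixed set partition \<omega> having
  exactly one type.

  If a block B of \<omega> met some orbit in two points, some \<sigma>^k with p not dividing k would map B
  onto itself, and B would contain a whole \<sigma>^k-orbit, of size p > a. So each block meets each
  orbit at most once; the sets of orbits met by the blocks form a set partition \<delta> of {1..as}
  into sets of size a, and the blocks of \<omega> are the \<sigma>-translates of one representative for each
  block of \<delta>. This \<delta> is the unique type of \<omega>.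
*)

lemma image_funpow_eq: "f ` B = B \<Longrightarrow> (f ^^ m) ` B = B"
proof (induction m)
  case (Suc m)
  have "(f ^^ Suc m) ` B = f ` (f ^^ m) ` B" by (simp only: funpow.simps image_comp)
  then show ?case using Suc by simp
qed simp

lemma finite_setparts: "finite (setparts N m a)"
  by (rule finite_subset[OF _ finitely_many_partition_on[of "{1..N}"]]) (auto simp: setparts_def)

lemma act_part_act_part: "act_part f (act_part g \<omega>) = act_part (f \<circ> g) \<omega>"
  by (simp add: act_part_def image_image image_comp)

section \<open>Block rotations\<close>

definition block_of :: "nat \<Rightarrow> nat \<Rightarrow> nat" where
  "block_of p x = (x - 1) div p + 1"

definition rotate_in_block :: "nat \<Rightarrow> nat \<Rightarrow> nat \<Rightarrow> nat" where
  "rotate_in_block p m x = p * ((x - 1) div p) + ((x - 1) mod p + m) mod p + 1"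

(* Rotation of the orbit O_j by c j steps, for every j; 0 lies in no orbit and stays fixed. *)
definition block_rotation :: "nat \<Rightarrow> (nat \<Rightarrow> nat) \<Rightarrow> nat \<Rightarrow> nat" where
  "block_rotation p c x = (if x = 0 then 0 else rotate_in_block p (c (block_of p x)) x)"

definition uniform_shift :: "nat \<Rightarrow> nat \<Rightarrow> nat \<Rightarrow> nat" where
  "uniform_shift n k i = (if 1 \<le> i \<and> i \<le> n then k else 0)"

definition part_type :: "nat \<Rightarrow> nat set set \<Rightarrow> nat set set" where
  "part_type p \<omega> = (\<lambda>B. block_of p ` B) ` \<omega>"

lemma block_of_pos: "1 \<le> block_of p x"
  by (simp add: block_of_def)

lemma rotate_in_block_neq_0: "rotate_in_block p m x \<noteq> 0"
  by (simp add: rotate_in_block_def)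

lemma rotate_in_block_0: "1 \<le> x \<Longrightarrow> rotate_in_block p 0 x = x"
  by (simp add: rotate_in_block_def)

lemma rotate_in_block_multiple: "1 \<le> x \<Longrightarrow> m mod p = 0 \<Longrightarrow> rotate_in_block p m x = x"
  by (simp add: rotate_in_block_def mod_add_right_eq[symmetric])

lemma block_rotation_zero: "block_rotation p (\<lambda>i. 0) = id"
  by (rule ext) (simp add: block_rotation_def rotate_in_block_0)

lemma block_rotation_pos: "0 < x \<Longrightarrow> 0 < block_rotation p c x"
  by (simp add: block_rotation_def rotate_in_block_def)

lemma block_rotation_multiple: "\<forall>i. c i mod p = 0 \<Longrightarrow> block_rotation p c x = x"
  by (simp add: block_rotation_def rotate_in_block_multiple)

context
  fixes p :: nat
  assumes p_pos: "0 < p"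
begin

lemma rotate_in_block_minus_1:
  "rotate_in_block p m x - 1 = ((x - 1) mod p + m) mod p + (x - 1) div p * p"
  by (simp add: rotate_in_block_def)

lemma div_rotate_in_block: "(rotate_in_block p m x - 1) div p = (x - 1) div p"
  using p_pos by (subst rotate_in_block_minus_1) simp

lemma mod_rotate_in_block: "(rotate_in_block p m x - 1) mod p = ((x - 1) mod p + m) mod p"
  using p_pos by (subst rotate_in_block_minus_1) simp

lemma block_of_rotate_in_block: "block_of p (rotate_in_block p m x) = block_of p x"
  using div_rotate_in_block by (simp add: block_of_def)

lemma rotate_in_block_add:
  "rotate_in_block p m' (rotate_in_block p m x) = rotate_in_block p (m + m') x"
  unfolding rotate_in_block_def[of p m'] using div_rotate_in_block mod_rotate_in_block
  by (simp add: rotate_in_block_def[of p "m + m'"] mod_add_left_eq add.assoc)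

lemma ex_rotate_in_block:
  assumes "1 \<le> x" "1 \<le> y" "block_of p x = block_of p y"
  shows "\<exists>k<p. rotate_in_block p k y = x"
proof -
  define k where "k = ((x - 1) mod p + p - (y - 1) mod p) mod p"
  have "(y - 1) mod p < p" using p_pos by simp
  then have "((y - 1) mod p + k) mod p = ((x - 1) mod p + p) mod p"
    unfolding k_def by (simp add: mod_add_right_eq)
  then have "((y - 1) mod p + k) mod p = (x - 1) mod p" by simp
  moreover have "(y - 1) div p = (x - 1) div p" using assms(3) by (simp add: block_of_def)
  ultimately have "rotate_in_block p k y = x" using assms(1) by (simp add: rotate_in_block_def)
  moreover have "k < p" using p_pos by (simp add: k_def)
  ultimately show ?thesis by blast
qed

lemma rotate_in_block_mult_inj:
  assumes "prime p" "\<not> p dvd k" "m < p" "m' < p"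
    and "rotate_in_block p (k * m) x = rotate_in_block p (k * m') x"
  shows "m = m'"
proof -
  have "((x - 1) mod p + k * m) mod p = ((x - 1) mod p + k * m') mod p"
    using mod_rotate_in_block[of "k * m" x] mod_rotate_in_block[of "k * m'" x] assms(5) by simp
  then have "[(x - 1) mod p + k * m = (x - 1) mod p + k * m'] (mod p)" by (simp add: cong_def)
  then have "[k * m = k * m'] (mod p)" by (simp add: cong_add_lcancel_nat)
  moreover have "coprime k p" using assms(1,2) prime_imp_coprime coprime_commute by blast
  ultimately have "[m = m'] (mod p)" using cong_mult_lcancel_nat by blast
  then show ?thesis using assms(3,4) by (simp add: cong_def)
qed

lemma mem_orb_iff: "1 \<le> j \<Longrightarrow> x \<in> orb p j \<longleftrightarrow> 1 \<le> x \<and> block_of p x = j"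
proof -
  assume j: "1 \<le> j"
  have "x \<in> orb p j \<longleftrightarrow> 1 \<le> x \<and> p * (j - 1) \<le> x - 1 \<and> x - 1 < p * j"
    unfolding orb_def by auto
  also have "\<dots> \<longleftrightarrow> 1 \<le> x \<and> (x - 1) div p = j - 1"
  proof -
    have "p * (j - 1) \<le> x - 1 \<longleftrightarrow> j - 1 \<le> (x - 1) div p"
      using p_pos by (simp add: less_eq_div_iff_mult_less_eq mult.commute)
    moreover have "x - 1 < p * j \<longleftrightarrow> (x - 1) div p < j"
      using p_pos by (simp add: div_less_iff_less_mult mult.commute)
    ultimately show ?thesis using j by auto
  qed
  also have "\<dots> \<longleftrightarrow> 1 \<le> x \<and> block_of p x = j"
    using j by (auto simp: block_of_def)
  finally show ?thesis .
qed

lemma mem_atLeastAtMost_iff_block_of: "x \<in> {1..n * p} \<longleftrightarrow> 1 \<le> x \<and> block_of p x \<le> n"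
  using p_pos by (auto simp: block_of_def less_Suc_eq_le[symmetric] div_less_iff_less_mult)

lemma block_of_image_atLeastAtMost: "block_of p ` {1..n * p} = {1..n}"
proof
  show "block_of p ` {1..n * p} \<subseteq> {1..n}"
    using mem_atLeastAtMost_iff_block_of block_of_pos by auto
  show "{1..n} \<subseteq> block_of p ` {1..n * p}"
  proof
    fix j assume j: "j \<in> {1..n}"
    have "p * j = p * (j - 1) + p" using j by (cases j) auto
    then have "p * (j - 1) + 1 \<in> orb p j" using p_pos by (simp add: orb_def)
    then have "block_of p (p * (j - 1) + 1) = j" using j mem_orb_iff[of j] by auto
    moreover have "p * (j - 1) + 1 \<in> {1..n * p}"
      unfolding mem_atLeastAtMost_iff_block_of using calculation j by simp
    ultimately
    show "j \<in> block_of p ` {1..n * p}" by (metis image_eqI)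
  qed
qed

lemma block_of_image_Int_orb: "X \<subseteq> {1..} \<Longrightarrow> 1 \<le> j \<Longrightarrow> block_of p ` (X \<inter> orb p j) = block_of p ` X \<inter> {j}"
  by (auto simp: mem_orb_iff)

lemma block_of_block_rotation: "1 \<le> x \<Longrightarrow> block_of p (block_rotation p c x) = block_of p x"
  by (simp add: block_rotation_def block_of_rotate_in_block)

lemma block_rotation_comp: "block_rotation p c \<circ> block_rotation p d = block_rotation p (\<lambda>i. d i + c i)"
  by (rule ext) (simp add: block_rotation_def block_of_rotate_in_block
      rotate_in_block_add rotate_in_block_neq_0)

lemma block_rotation_commute: "block_rotation p c \<circ> block_rotation p d = block_rotation p d \<circ> block_rotation p c"
  by (simp add: block_rotation_comp add.commute)

lemma block_rotation_funpow: "block_rotation p c ^^ m = block_rotation p (\<lambda>i. m * c i)"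
proof (induction m)
  case 0
  show ?case by (simp add: block_rotation_zero)
next
  case (Suc m)
  have "block_rotation p c ^^ Suc m = block_rotation p c \<circ> block_rotation p (\<lambda>i. m * c i)"
    by (simp only: funpow.simps Suc.IH)
  then show ?case by (simp only: block_rotation_comp) (simp add: add.commute)
qed

lemma block_rotation_inverse: "block_rotation p (\<lambda>i. (p - 1) * c i) (block_rotation p c x) = x"
proof -
  have "block_rotation p (\<lambda>i. (p - 1) * c i) \<circ> block_rotation p c = block_rotation p (\<lambda>i. p * c i)"
    using p_pos by (simp add: block_rotation_comp mult.commute[of _ "c _"] flip: mult_Suc_right)
  then show ?thesis by (simp add: fun_eq_iff block_rotation_multiple)
qed

lemma inj_block_rotation: "inj (block_rotation p c)"
  by (metis block_rotation_inverse injI)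

lemma block_rotation_mem_atLeastAtMost_iff:
  "block_rotation p c x \<in> {1..n * p} \<longleftrightarrow> x \<in> {1..n * p}"
proof (cases "x = 0")
  case False
  then show ?thesis
    unfolding mem_atLeastAtMost_iff_block_of
    by (simp add: block_of_block_rotation block_rotation_pos Suc_le_eq)
qed (simp add: block_rotation_def)

lemma block_rotation_image_atLeastAtMost: "block_rotation p c ` {1..n * p} = {1..n * p}"
proof
  show "block_rotation p c ` {1..n * p} \<subseteq> {1..n * p}"
    using block_rotation_mem_atLeastAtMost_iff by blast
  show "{1..n * p} \<subseteq> block_rotation p c ` {1..n * p}"
  proof
    fix y assume "y \<in> {1..n * p}"
    then have "block_rotation p (\<lambda>i. (p - 1) * c i) y \<in> {1..n * p}"
      using block_rotation_mem_atLeastAtMost_iff by blast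
    moreover have "y = block_rotation p c (block_rotation p (\<lambda>i. (p - 1) * c i) y)"
      using fun_cong[OF block_rotation_commute, of c "\<lambda>i. (p - 1) * c i" y] block_rotation_inverse
      by simp
    ultimately show "y \<in> block_rotation p c ` {1..n * p}" by blast
  qed
qed

lemma card_block_rotation_image_Int_orb:
  assumes "1 \<le> j"
  shows "card (block_rotation p c ` B \<inter> orb p j) = card (B \<inter> orb p j)"
proof -
  have "block_rotation p c x \<in> orb p j \<longleftrightarrow> x \<in> orb p j" for x
    by (cases "x = 0")
      (simp_all add: mem_orb_iff[OF assms] block_of_block_rotation block_rotation_pos Suc_le_eq,
        simp add: block_rotation_def)
  then have "block_rotation p c ` B \<inter> orb p j = block_rotation p c ` (B \<inter> orb p j)" by auto
  then show ?thesis
    by (metis card_image inj_block_rotation inj_on_subset subset_UNIV)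
qed

lemma zcyc_eq_block_rotation: "zcyc p j = block_rotation p (\<lambda>i. if i = j then 1 else 0)"
proof
  fix x
  show "zcyc p j x = block_rotation p (\<lambda>i. if i = j then 1 else 0) x"
  proof (cases "x \<in> orb p j")
    case True
    then have j: "1 \<le> j" by (cases j) (auto simp: orb_def)
    define t where "t = x - 1 - p * (j - 1)"
    have x: "p * (j - 1) + 1 \<le> x" "x \<le> p * j" using True by (auto simp: orb_def)
    moreover have pj: "p * j = p * (j - 1) + p" using j by (cases j) auto
    ultimately have xt: "x - 1 = t + p * (j - 1)" and t: "t < p" unfolding t_def by linarith+
    then have "(x - 1) div p = j - 1" "(x - 1) mod p = t" by simp_all
    then have "block_rotation p (\<lambda>i. if i = j then 1 else 0) x = p * (j - 1) + (t + 1) mod p + 1"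
      using x j by (simp add: block_rotation_def rotate_in_block_def block_of_def)
    moreover have "x = p * j \<longleftrightarrow> t + 1 = p" using x pj unfolding t_def by linarith
    ultimately show ?thesis
      using True t xt x by (cases "t + 1 = p") (auto simp: zcyc_def)
  next
    case False
    have "block_of p x \<noteq> j" if "x \<noteq> 0"
      using False that mem_orb_iff[of j x] block_of_pos[of p x] by auto
    then show ?thesis
      using False by (cases "x = 0") (simp_all add: zcyc_def block_rotation_def rotate_in_block_0)
  qed
qed

lemma foldr_zcyc_eq_block_rotation:
  "foldr (\<lambda>j f. zcyc p j \<circ> f) js id = block_rotation p (count_list js)"
proof (induction js)
  case Nil
  have "count_list [] = (\<lambda>_. 0)" by (simp add: fun_eq_iff)
  then show ?case by (simp add: block_rotation_zero)
next
  case (Cons j js)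
  have "foldr (\<lambda>j f. zcyc p j \<circ> f) (j # js) id = zcyc p j \<circ> block_rotation p (count_list js)"
    by (simp only: foldr.simps comp_apply Cons.IH)
  also have "\<dots> = block_rotation p (count_list (j # js))"
    unfolding zcyc_eq_block_rotation block_rotation_comp
    by (rule arg_cong[where f = "block_rotation p"]) (simp add: fun_eq_iff)
  finally show ?case .
qed

lemma sigma_pow_eq_block_rotation: "sigma p n ^^ k = block_rotation p (uniform_shift n k)"
proof -
  have "count_list [1..<Suc n] = uniform_shift n 1"
    by (rule ext, induction n) (auto simp: uniform_shift_def)
  then have "sigma p n = block_rotation p (uniform_shift n 1)"
    by (simp add: sigma_def foldr_zcyc_eq_block_rotation)
  moreover have "(\<lambda>i. k * uniform_shift n 1 i) = uniform_shift n k"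
    by (simp add: uniform_shift_def fun_eq_iff)
  ultimately show ?thesis by (simp add: block_rotation_funpow)
qed

lemma sigma_pow_apply: "x \<in> {1..n * p} \<Longrightarrow> (sigma p n ^^ k) x = rotate_in_block p k x"
  using block_of_pos[of p x] mem_atLeastAtMost_iff_block_of[of x n]
  by (auto simp: sigma_pow_eq_block_rotation block_rotation_def uniform_shift_def)

lemma block_of_image_sigma_pow: "X \<subseteq> {1..} \<Longrightarrow> block_of p ` (sigma p n ^^ k) ` X = block_of p ` X"
  by (force simp: image_comp sigma_pow_eq_block_rotation block_of_block_rotation intro: image_cong)

lemma Cgrp_block_rotation:
  assumes "g \<in> Cgrp p n"
  obtains c where "g = block_rotation p c"
proof -
  obtain k where g: "g = foldr (\<lambda>j f. (zcyc p j ^^ k j) \<circ> f) [1..<Suc n] id"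
    using assms by (auto simp: Cgrp_def)
  have "\<exists>c. foldr (\<lambda>j f. (zcyc p j ^^ k j) \<circ> f) js id = block_rotation p c" for js
  proof (induction js)
    case Nil
    show ?case using block_rotation_zero by (metis foldr_Nil id_apply)
  next
    case (Cons j js)
    then obtain c where "foldr (\<lambda>j f. (zcyc p j ^^ k j) \<circ> f) js id = block_rotation p c" by blast
    then have "foldr (\<lambda>j f. (zcyc p j ^^ k j) \<circ> f) (j # js) id
        = block_rotation p (\<lambda>i. k j * (if i = j then 1 else 0)) \<circ> block_rotation p c"
      by (simp only: foldr.simps comp_apply zcyc_eq_block_rotation block_rotation_funpow)
    then show ?case by (simp only: block_rotation_comp) blast
  qed
  then show ?thesis using g that by blast
qed

section \<open>The action of C on fixed set partitions\<close>

lemma act_part_block_rotation_fixparts: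
  assumes "\<omega> \<in> fixparts p a s"
  shows "act_part (block_rotation p c) \<omega> \<in> fixparts p a s"
proof -
  let ?g = "block_rotation p c"
  have P: "partition_on {1..a*s*p} \<omega>" and card: "card \<omega> = s*p" "\<forall>B\<in>\<omega>. card B = a"
    and fixed: "\<forall>h\<in>Rgrp p (a*s). act_part h \<omega> = \<omega>"
    using assms by (auto simp: fixparts_def setparts_def)
  have "partition_on (?g ` {1..a*s*p}) ((`) ?g ` \<omega> - {{}})"
    by (rule partition_on_inj_image[OF P]) (rule inj_on_subset[OF inj_block_rotation], simp)
  moreover have "(`) ?g ` \<omega> - {{}} = act_part ?g \<omega>"
    using partition_onD3[OF P] by (auto simp: act_part_def)
  ultimately have "partition_on {1..a*s*p} (act_part ?g \<omega>)"
    using block_rotation_image_atLeastAtMost[of c "a*s"] by simp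
  moreover have "card (act_part ?g \<omega>) = s*p" "\<forall>B\<in>act_part ?g \<omega>. card B = a"
    using card inj_block_rotation[of c]
    by (auto simp: act_part_def card_image inj_on_subset inj_image_eq_iff inj_on_def)
  moreover have "act_part h (act_part ?g \<omega>) = act_part ?g \<omega>" if h: "h \<in> Rgrp p (a*s)" for h
  proof -
    obtain k where "h = block_rotation p (uniform_shift (a*s) k)"
      using h by (auto simp: Rgrp_def sigma_pow_eq_block_rotation)
    then have "act_part h (act_part ?g \<omega>) = act_part ?g (act_part h \<omega>)"
      by (simp only: act_part_act_part block_rotation_commute)
    then show ?thesis using fixed h by simp
  qed
  ultimately show ?thesis by (simp add: fixparts_def setparts_def)
qed

lemma has_type_act_part_block_rotation:
  assumes "has_type p a s \<delta> \<omega>"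
  shows "has_type p a s \<delta> (act_part (block_rotation p c) \<omega>)"
proof -
  let ?g = "block_rotation p c"
  obtain A where A: "\<forall>D\<in>\<delta>. \<forall>j\<ge>1. card (A D \<inter> orb p j) = (if j \<in> D then 1 else 0)"
    and \<omega>: "\<omega> = {(sigma p (a*s) ^^ k) ` A D | D k. D \<in> \<delta> \<and> k \<le> p - 1}"
    using assms unfolding has_type_def by blast
  have "?g ` (sigma p (a*s) ^^ k) ` X = (sigma p (a*s) ^^ k) ` ?g ` X" for k X
    by (simp only: image_comp sigma_pow_eq_block_rotation block_rotation_commute)
  then have "act_part ?g \<omega> = {(sigma p (a*s) ^^ k) ` ?g ` A D | D k. D \<in> \<delta> \<and> k \<le> p - 1}"
    unfolding \<omega> act_part_def by blast
  moreover have "\<forall>D\<in>\<delta>. \<forall>j\<ge>1. card (?g ` A D \<inter> orb p j) = (if j \<in> D then 1 else 0)"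
    using A card_block_rotation_image_Int_orb by simp
  ultimately show ?thesis unfolding has_type_def by (intro exI[of _ "\<lambda>D. ?g ` A D"] conjI)
qed

section \<open>The type of a fixed set partition\<close>

lemma fixparts_subset_atLeastAtMost:
  "\<omega> \<in> fixparts p a s \<Longrightarrow> B \<in> \<omega> \<Longrightarrow> B \<subseteq> {1..a*s*p}"
  by (auto simp: fixparts_def setparts_def dest: partition_onD1)

lemma sigma_pow_image_mem_fixparts:
  assumes "\<omega> \<in> fixparts p a s" "B \<in> \<omega>"
  shows "(sigma p (a*s) ^^ k) ` B \<in> \<omega>"
proof -
  have "act_part (sigma p (a*s) ^^ k) \<omega> = \<omega>"
    using assms(1) by (auto simp: fixparts_def Rgrp_def)
  then show ?thesis using assms(2) unfolding act_part_def by blast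
qed

lemma fixparts_sigma_pow_image_eq:
  assumes "\<omega> \<in> fixparts p a s" "B \<in> \<omega>" "B' \<in> \<omega>" "y \<in> B'" "y \<in> (sigma p (a*s) ^^ k) ` B"
  shows "(sigma p (a*s) ^^ k) ` B = B'"
proof -
  have "disjoint \<omega>" using assms(1) by (auto simp: fixparts_def setparts_def partition_on_def)
  then show ?thesis
    using sigma_pow_image_mem_fixparts[OF assms(1,2)] assms(3-5) by (metis disjointD IntI empty_iff)
qed

lemma fixparts_same_block_imp_sigma_pow_image:
  assumes "\<omega> \<in> fixparts p a s" "B \<in> \<omega>" "B' \<in> \<omega>" "x \<in> B" "y \<in> B'" "block_of p x = block_of p y"
  obtains k where "k < p" "B' = (sigma p (a*s) ^^ k) ` B"
proof -
  have x: "x \<in> {1..a*s*p}" and y: "y \<in> {1..a*s*p}"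
    using fixparts_subset_atLeastAtMost assms by blast+
  obtain k where "k < p" "rotate_in_block p k x = y"
    using ex_rotate_in_block[of y x] assms(6) x y by auto
  then have "y \<in> (sigma p (a*s) ^^ k) ` B"
    using sigma_pow_apply[OF x] assms(4) by (metis image_eqI)
  then show ?thesis
    using fixparts_sigma_pow_image_eq[OF assms(1-3,5)] \<open>k < p\<close> that by metis
qed

lemma inj_on_block_of_fixparts:
  assumes "prime p" "a < p" "\<omega> \<in> fixparts p a s" "B \<in> \<omega>"
  shows "inj_on (block_of p) B"
proof (rule inj_onI, rule ccontr)
  fix x y assume xy: "x \<in> B" "y \<in> B" "block_of p x = block_of p y" "x \<noteq> y"
  have x: "x \<in> {1..a*s*p}" and y: "y \<in> {1..a*s*p}"
    using fixparts_subset_atLeastAtMost assms(3,4) xy(1,2) by blast+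
  obtain k where k: "k < p" "rotate_in_block p k x = y"
    using ex_rotate_in_block[of y x] xy(3) x y by auto
  have "k \<noteq> 0" using k xy(4) x rotate_in_block_0[of x p] by (metis atLeastAtMost_iff)
  then have "\<not> p dvd k" using k(1) by (auto dest: dvd_imp_le)
  have "(sigma p (a*s) ^^ k) x = y" using sigma_pow_apply[OF x] k(2) by simp
  then have "y \<in> (sigma p (a*s) ^^ k) ` B" using xy(1) by blast
  then have "(sigma p (a*s) ^^ k) ` B = B"
    by (rule fixparts_sigma_pow_image_eq[OF assms(3,4,4) xy(2)])
  then have "(sigma p (a*s) ^^ (k * m)) ` B = B" for m
    by (simp only: funpow_mult[symmetric] image_funpow_eq)
  then have "(\<lambda>m. rotate_in_block p (k * m) x) ` {..<p} \<subseteq> B"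
    using sigma_pow_apply[OF x] xy(1) by (metis image_eqI image_subsetI)
  moreover have "inj_on (\<lambda>m. rotate_in_block p (k * m) x) {..<p}"
    using rotate_in_block_mult_inj[OF assms(1) \<open>\<not> p dvd k\<close>] by (auto intro: inj_onI)
  moreover have "finite B" using fixparts_subset_atLeastAtMost[OF assms(3,4)] finite_subset by blast
  ultimately have "card ((\<lambda>m. rotate_in_block p (k * m) x) ` {..<p}) \<le> card B"
    "card ((\<lambda>m. rotate_in_block p (k * m) x) ` {..<p}) = p"
    using card_mono card_image by fastforce+
  then have "p \<le> card B" by simp
  moreover have "card B = a" using assms(3,4) by (auto simp: fixparts_def setparts_def)
  ultimately show False using assms(2) by simp
qed

lemma card_block_of_image_fixparts:
  assumes "prime p" "a < p" "\<omega> \<in> fixparts p a s" "B \<in> \<omega>"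
  shows "card (block_of p ` B) = a"
proof -
  have "card B = a" using assms(3,4) by (simp add: fixparts_def setparts_def)
  then show ?thesis using card_image[OF inj_on_block_of_fixparts[OF assms]] by simp
qed

lemma partition_on_part_type:
  assumes "\<omega> \<in> fixparts p a s"
  shows "partition_on {1..a*s} (part_type p \<omega>)"
proof (rule partition_onI)
  have "\<Union>\<omega> = {1..a*s*p}" using assms by (auto simp: fixparts_def setparts_def dest: partition_onD1)
  moreover have "\<Union>(part_type p \<omega>) = block_of p ` \<Union>\<omega>" by (auto simp: part_type_def)
  ultimately show "\<Union>(part_type p \<omega>) = {1..a*s}" using block_of_image_atLeastAtMost by simp
  fix D D' assume D: "D \<in> part_type p \<omega>" and D': "D' \<in> part_type p \<omega>" and "D \<noteq> D'"
  show "disjnt D D'"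
  proof (rule ccontr)
    assume "\<not> disjnt D D'"
    then obtain B B' x y where B: "B \<in> \<omega>" "D = block_of p ` B" "x \<in> B"
      and B': "B' \<in> \<omega>" "D' = block_of p ` B'" "y \<in> B'" and "block_of p x = block_of p y"
      using D D' unfolding part_type_def disjnt_def by blast
    then obtain k where "B' = (sigma p (a*s) ^^ k) ` B"
      using fixparts_same_block_imp_sigma_pow_image[OF assms] by metis
    moreover have "B \<subseteq> {1..}" using fixparts_subset_atLeastAtMost[OF assms B(1)] by auto
    ultimately have "D' = D" using B(2) B'(2) block_of_image_sigma_pow by simp
    with \<open>D \<noteq> D'\<close> show False by simp
  qed
next
  show "{} \<notin> part_type p \<omega>"
    using assms by (auto simp: part_type_def fixparts_def setparts_def dest: partition_onD3)
qed

lemma part_type_mem_setparts: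
  assumes "prime p" "a < p" "\<omega> \<in> fixparts p a s"
  shows "part_type p \<omega> \<in> setparts (a*s) s a"
proof -
  have P: "partition_on {1..a*s} (part_type p \<omega>)" by (rule partition_on_part_type[OF assms(3)])
  have card_D: "\<forall>D\<in>part_type p \<omega>. card D = a"
    using card_block_of_image_fixparts[OF assms] by (auto simp: part_type_def)
  have "card (part_type p \<omega>) = s"
  proof (cases "a = 0")
    case True
    have "B = {}" if "B \<in> \<omega>" for B
    proof -
      have "card B = 0" using that assms(3) True by (simp add: fixparts_def setparts_def)
      then show ?thesis using finite_subset[OF fixparts_subset_atLeastAtMost[OF assms(3) that]] by simp
    qed
    moreover have "{} \<notin> \<omega>"
      using assms(3) by (simp add: fixparts_def setparts_def partition_on_def)
    ultimately have "\<omega> = {}" by blast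
    then show ?thesis using assms(3) prime_gt_0_nat[OF assms(1)]
      by (simp add: fixparts_def setparts_def part_type_def)
  next
    case False
    have "a * card (part_type p \<omega>) = card (\<Union>(part_type p \<omega>))"
      using finite_elements[OF _ P] card_D partition_onD1[OF P] partition_onD2[OF P]
      by (intro card_partition) (auto simp: disjoint_def simp flip: partition_onD1[OF P])
    then have "a * card (part_type p \<omega>) = a * s" by (simp flip: partition_onD1[OF P])
    then show ?thesis using False by simp
  qed
  with P card_D show ?thesis by (simp add: setparts_def)
qed

lemma has_type_part_type:
  assumes "prime p" "a < p" "\<omega> \<in> fixparts p a s"
  shows "has_type p a s (part_type p \<omega>) \<omega>"
proof -
  define A where "A D = (SOME B. B \<in> \<omega> \<and> block_of p ` B = D)" for D
  have A: "A D \<in> \<omega>" "block_of p ` A D = D" if "D \<in> part_type p \<omega>" for D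
    using someI_ex[of "\<lambda>B. B \<in> \<omega> \<and> block_of p ` B = D"] that by (auto simp: A_def part_type_def)
  have "\<forall>D\<in>part_type p \<omega>. \<forall>j\<ge>1. card (A D \<inter> orb p j) = (if j \<in> D then 1 else 0)"
  proof (intro ballI allI impI)
    fix D j assume D: "D \<in> part_type p \<omega>" and j: "1 \<le> (j::nat)"
    have "A D \<subseteq> {1..}" using fixparts_subset_atLeastAtMost[OF assms(3) A(1)[OF D]] by auto
    then have "block_of p ` (A D \<inter> orb p j) = D \<inter> {j}"
      using block_of_image_Int_orb[OF _ j] A(2)[OF D] by simp
    moreover have "inj_on (block_of p) (A D \<inter> orb p j)"
      using inj_on_block_of_fixparts[OF assms A(1)[OF D]] by (rule inj_on_subset) simp
    ultimately have "card (A D \<inter> orb p j) = card (D \<inter> {j})" by (metis card_image)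
    then show "card (A D \<inter> orb p j) = (if j \<in> D then 1 else 0)" by simp
  qed
  moreover have "\<omega> = {(sigma p (a*s) ^^ k) ` A D | D k. D \<in> part_type p \<omega> \<and> k \<le> p - 1}"
  proof (intro equalityI subsetI)
    fix B assume B: "B \<in> \<omega>"
    moreover have "{} \<notin> \<omega>" using assms(3) by (simp add: fixparts_def setparts_def partition_on_def)
    ultimately have "B \<noteq> {}" by auto
    then obtain x where x: "x \<in> B" by blast
    define D where "D = block_of p ` B"
    have D: "D \<in> part_type p \<omega>" using B by (simp add: D_def part_type_def)
    then obtain y where y: "y \<in> A D" "block_of p y = block_of p x"
      using A(2)[OF D] x unfolding D_def by (metis imageE image_eqI)
    then obtain k where "k < p" "B = (sigma p (a*s) ^^ k) ` A D"
      using fixparts_same_block_imp_sigma_pow_image[OF assms(3) A(1)[OF D] B y(1) x] by metis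
    then show "B \<in> {(sigma p (a*s) ^^ k) ` A D | D k. D \<in> part_type p \<omega> \<and> k \<le> p - 1}"
      using D \<open>k < p\<close> by (intro CollectI exI[of _ D] exI[of _ k]) simp
  qed (auto intro: sigma_pow_image_mem_fixparts[OF assms(3) A(1)])
  ultimately show ?thesis unfolding has_type_def by (intro exI[of _ A] conjI)
qed

lemma has_type_imp_eq_part_type:
  assumes "\<omega> \<in> fixparts p a s" "\<delta> \<in> setparts (a*s) s a" "has_type p a s \<delta> \<omega>"
  shows "\<delta> = part_type p \<omega>"
proof -
  obtain A where A_card: "\<forall>D\<in>\<delta>. \<forall>j\<ge>1. card (A D \<inter> orb p j) = (if j \<in> D then 1 else 0)"
    and \<omega>: "\<omega> = {(sigma p (a*s) ^^ k) ` A D | D k. D \<in> \<delta> \<and> k \<le> p - 1}"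
    using assms(3) unfolding has_type_def by blast
  have A_mem: "A D \<in> \<omega>" if "D \<in> \<delta>" for D
  proof -
    have "(sigma p (a*s) ^^ 0) ` A D = A D" by simp
    then show ?thesis unfolding \<omega> using that by blast
  qed
  have A_sub: "A D \<subseteq> {1..}" if "D \<in> \<delta>" for D
    using fixparts_subset_atLeastAtMost[OF assms(1) A_mem[OF that]] by auto
  have block_of_A: "block_of p ` A D = D" if D: "D \<in> \<delta>" for D
  proof (intro set_eqI iffI)
    fix j assume j: "j \<in> block_of p ` A D"
    then have "1 \<le> j" using block_of_pos by auto
    with j have "A D \<inter> orb p j \<noteq> {}" using block_of_image_Int_orb[OF A_sub[OF D]] by auto
    moreover have "finite (orb p j)" by (simp add: orb_def)
    ultimately have "card (A D \<inter> orb p j) \<noteq> 0" by simp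
    then show "j \<in> D" using A_card D \<open>1 \<le> j\<close> by (auto split: if_splits)
  next
    fix j assume j: "j \<in> D"
    have "D \<subseteq> {1..a*s}" using assms(2) D by (simp add: setparts_def partition_on_def) blast
    then have "1 \<le> j" using j by auto
    then have "card (A D \<inter> orb p j) = 1" using A_card D j by simp
    then have "A D \<inter> orb p j \<noteq> {}" by auto
    then show "j \<in> block_of p ` A D"
      using block_of_image_Int_orb[OF A_sub[OF D] \<open>1 \<le> j\<close>] by auto
  qed
  show ?thesis
  proof (intro equalityI subsetI)
    fix D assume "D \<in> \<delta>"
    then show "D \<in> part_type p \<omega>"
      using A_mem block_of_A unfolding part_type_def by (metis image_eqI)
  next
    fix D assume "D \<in> part_type p \<omega>"
    then obtain B where "B \<in> \<omega>" "D = block_of p ` B" by (auto simp: part_type_def)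
    then obtain D' k where "D' \<in> \<delta>" "D = block_of p ` (sigma p (a*s) ^^ k) ` A D'"
      unfolding \<omega> by blast
    then show "D \<in> \<delta>" using block_of_image_sigma_pow[OF A_sub] block_of_A by simp
  qed
qed

lemma has_type_iff_eq_part_type:
  assumes "prime p" "a < p" "\<omega> \<in> fixparts p a s" "\<delta> \<in> setparts (a*s) s a"
  shows "has_type p a s \<delta> \<omega> \<longleftrightarrow> \<delta> = part_type p \<omega>"
  using has_type_imp_eq_part_type[OF assms(3,4)] has_type_part_type[OF assms(1-3)] by blast

section \<open>The decomposition\<close>

lemma sum_setparts_eq_part_type:
  assumes "prime p" "a < p" "\<omega> \<in> fixparts p a s"
    and "\<And>\<delta>. \<delta> \<in> setparts (a*s) s a \<Longrightarrow> \<not> has_type p a s \<delta> \<omega> \<Longrightarrow> f \<delta> = 0"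
  shows "(\<Sum>\<delta>\<in>setparts (a*s) s a. f \<delta>) = f (part_type p \<omega>)"
proof -
  have "part_type p \<omega> \<in> setparts (a*s) s a" by (rule part_type_mem_setparts[OF assms(1-3)])
  moreover have "f \<delta> = 0" if "\<delta> \<in> setparts (a*s) s a - {part_type p \<omega>}" for \<delta>
    using that assms(4) has_type_iff_eq_part_type[OF assms(1-3)] by blast
  ultimately show ?thesis by (simp add: sum.remove[OF finite_setparts])
qed

lemma act_vec_mem_Kdelta:
  assumes "g \<in> Cgrp p (a*s)" "v \<in> Kdelta p a s \<delta>"
  shows "act_vec p a s g v \<in> Kdelta p a s \<delta>"
  unfolding Kdelta_def
proof (intro CollectI allI impI)
  fix \<omega>' assume "act_vec p a s g v \<omega>' \<noteq> 0"
  then obtain \<omega> where \<omega>: "\<omega> \<in> fixparts p a s" "act_part g \<omega> = \<omega>'" "v \<omega> \<noteq> 0"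
    unfolding act_vec_def by (smt (verit) mem_Collect_eq sum.neutral)
  obtain c where g: "g = block_rotation p c" using Cgrp_block_rotation[OF assms(1)] by blast
  have "has_type p a s \<delta> \<omega>" using assms(2) \<omega>(3) by (simp add: Kdelta_def)
  then show "\<omega>' \<in> fixparts p a s \<and> has_type p a s \<delta> \<omega>'"
    unfolding \<omega>(2)[symmetric] g
    by (simp add: act_part_block_rotation_fixparts[OF \<omega>(1)] has_type_act_part_block_rotation)
qed

lemma Hbr_eq_sum_Kdelta:
  assumes "prime p" "a < p" "v \<in> Hbr p a s"
  shows "\<exists>u. (\<forall>\<delta>\<in>setparts (a*s) s a. u \<delta> \<in> Kdelta p a s \<delta>)
    \<and> v = (\<lambda>\<omega>. \<Sum>\<delta>\<in>setparts (a*s) s a. u \<delta> \<omega>)"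
proof (intro exI conjI)
  let ?u = "\<lambda>\<delta> \<omega>. if has_type p a s \<delta> \<omega> then v \<omega> else 0"
  show "\<forall>\<delta>\<in>setparts (a*s) s a. ?u \<delta> \<in> Kdelta p a s \<delta>"
    using assms(3) by (simp add: Kdelta_def Hbr_def)
  show "v = (\<lambda>\<omega>. \<Sum>\<delta>\<in>setparts (a*s) s a. ?u \<delta> \<omega>)"
  proof
    fix \<omega>
    show "v \<omega> = (\<Sum>\<delta>\<in>setparts (a*s) s a. ?u \<delta> \<omega>)"
    proof (cases "v \<omega> = 0")
      case True
      show ?thesis unfolding True by simp
    next
      case False
      then have \<omega>: "\<omega> \<in> fixparts p a s" using assms(3) by (simp add: Hbr_def)
      have "(\<Sum>\<delta>\<in>setparts (a*s) s a. ?u \<delta> \<omega>) = ?u (part_type p \<omega>) \<omega>"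
        by (rule sum_setparts_eq_part_type[OF assms(1,2) \<omega>]) simp
      then show ?thesis using has_type_part_type[OF assms(1,2) \<omega>] by simp
    qed
  qed
qed

lemma sum_Kdelta_eq_0_imp_eq_0:
  assumes "prime p" "a < p" "\<forall>\<delta>\<in>setparts (a*s) s a. u \<delta> \<in> Kdelta p a s \<delta>"
    and "(\<Sum>\<delta>\<in>setparts (a*s) s a. u \<delta> \<omega>) = 0" "\<delta> \<in> setparts (a*s) s a"
  shows "u \<delta> \<omega> = 0"
proof (cases "\<omega> \<in> fixparts p a s")
  case True
  have vanish: "u \<delta>' \<omega> = 0" if "\<delta>' \<in> setparts (a*s) s a" "\<not> has_type p a s \<delta>' \<omega>" for \<delta>'
    using assms(3) that by (auto simp: Kdelta_def)
  have "(\<Sum>\<delta>\<in>setparts (a*s) s a. u \<delta> \<omega>) = u (part_type p \<omega>) \<omega>"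
    by (rule sum_setparts_eq_part_type[OF assms(1,2) True]) (rule vanish)
  then have "u (part_type p \<omega>) \<omega> = 0" using assms(4) by simp
  then show ?thesis
    using vanish[OF assms(5)] has_type_iff_eq_part_type[OF assms(1,2) True assms(5)] by metis
next
  case False
  then show ?thesis using assms(3,5) by (auto simp: Kdelta_def)
qed

end

theorem proposition3p4:
  fixes p a s :: nat
  assumes "prime p" and "odd p" and "CHAR('f::field) = p" and "a < p"
  shows
    "(\<forall>\<delta>\<in>setparts (a*s) s a. \<forall>g\<in>Cgrp p (a*s). \<forall>v\<in>(Kdelta p a s \<delta> :: (nat set set \<Rightarrow> 'f) set).
        act_vec p a s g v \<in> Kdelta p a s \<delta>)
     \<and> (\<forall>v\<in>(Hbr p a s :: (nat set set \<Rightarrow> 'f) set). \<exists>u. (\<forall>\<delta>\<in>setparts (a*s) s a. u \<delta> \<in> Kdelta p a s \<delta>)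
           \<and> v = (\<lambda>\<omega>. \<Sum>\<delta>\<in>setparts (a*s) s a. u \<delta> \<omega>))
     \<and> (\<forall>u :: nat set set \<Rightarrow> nat set set \<Rightarrow> 'f. (\<forall>\<delta>\<in>setparts (a*s) s a. u \<delta> \<in> Kdelta p a s \<delta>)
           \<and> (\<forall>\<omega>. (\<Sum>\<delta>\<in>setparts (a*s) s a. u \<delta> \<omega>) = 0) \<longrightarrow> (\<forall>\<delta>\<in>setparts (a*s) s a. \<forall>\<omega>. u \<delta> \<omega> = 0))"
proof -
  have p: "0 < p" using assms(1) prime_gt_0_nat by blast
  show ?thesis
    using act_vec_mem_Kdelta[OF p] Hbr_eq_sum_Kdelta[OF p assms(1,4)]
      sum_Kdelta_eq_0_imp_eq_0[OF p assms(1,4)]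
    by blast
qed

end
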